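(* Let $\varphi$ be a SaSTL formula (as defined in the context), let $\omega,\omega'$ be spatio-temporal signals over the same $\mathbb{T}$, $L$ and $X$, and let $t\in\mathbb{T}$, $l\in L$. Write $\|\omega-\omega'\|_\infty=\sup_{t_0\in\mathbb{T},\,l_0\in L,\,x\in X}|\pi_x(\omega)[t_0,l_0]-\pi_x(\omega')[t_0,l_0]|$. If $(\omega,t,l)\models\varphi$ and $\|\omega-\omega'\|_\infty<\rho(\varphi,\omega,t,l)$, then $(\omega',t,l)\models\varphi$.
   Context: Time domain $\mathbb{T}=\mathbb{R}_{\ge 0}$. $L$ is a finite nonempty set of locations. $G=(L,E,\eta)$ is a weighted undirected graph with edge weights $\eta:E\to\mathbb{R}_{\ge0}$; the distance $d(l,l')$ is the minimum, over all paths $\sigma$ between $l$ and $l'$, of $\sum_{e\in\sigma}\eta(e)$ (and $+\infty$ if there is no path). $X=\{x_1,\dots,x_n\}$ is a set of signal variables. A spatio-temporal signal is a function $\omega:\mathbb{T}\times L\to\mathbb{R}^n$; $\pi_{x}(\omega)[t,l]\in\mathbb{R}$ denotes its component for variable $x\in X$ at time $t$ and location $l$. $P$ is a finite set of propositions and $\mathcal{L}:L\to 2^P$ a labeling. Location formulas are $\psi::=\top\mid p\mid\neg\psi\mid\psi\vee\psi$ ($p\in P$), with $\mathcal{L}(l)\models\psi$ defined in the usual propositional way. A spatial domain is $\mathcal{D}=([d_1,d_2],\psi)$ with $0\le d_1\le d_2\le+\infty$. For $l\in L$ let $L^l_{\mathcal{D}}=\{l'\in L: d_1\le d(l,l')\le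 d_2,\ \mathcal{L}(l')\models\psi\}$. Standing assumption: for every spatial domain $\mathcal{D}$ occurring in the formula and every $l\in L$, $L^l_{\mathcal{D}}\neq\emptyset$. Let $\alpha^x_{\mathcal{D}}(\omega,t,l)$ be the (nonempty, finite) multiset $\{\pi_x(\omega)[t,l'] : l'\in L^l_{\mathcal{D}}\}$, and for $\mathrm{op}\in\{\max,\min,\mathrm{sum},\mathrm{avg}\}$ let $\mathrm{op}(\cdot)$ be its maximum, minimum, sum, or arithmetic mean. SaSTL syntax: $\varphi::= x>c \mid \neg\varphi\mid \varphi_1\wedge\varphi_2\mid\varphi_1\vee\varphi_2\mid \varphi_1\,\mathcal{U}_I\,\varphi_2\mid \mathcal{A}^{\mathrm{op}}_{\mathcal{D}}x>c\mid \mathcal{C}^{\mathrm{op}}_{\mathcal{D}}\varphi>c$, where $x\in X$, $c\in\mathbb{R}$, $I\subseteq\mathbb{R}_{>0}$ is a nonempty interval, $\mathrm{op}\in\{\max,\min,\mathrm{sum},\mathrm{avg}\}$. For counting formulas $\mathcal{C}^{\mathrm{op}}_{\mathcal{D}}\varphi>c$ it is assumed that $0\le c<1$ if $\mathrm{op}\in\{\max,\min,\mathrm{avg}\}$ and $0\le c<|L^l_{\mathcal{D}}|$ for all $l\in L$ if $\mathrm{op}=\mathrm{sum}$. Boolean semantics: $(\omega,t,l)\models x>c$ iff $\pi_x(\omega)[t,l]>c$; $\neg,\wedge,\vee$ as usual; $(\omega,t,l)\models\varphi_1\mathcal{U}_I\varphi_2$ iff there is $t'\in(t+I)\cap\mathbb{T}$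 with $(\omega,t',l)\models\varphi_2$ and $(\omega,t'',l)\models\varphi_1$ for all $t''\in(t,t')$ (open interval); $(\omega,t,l)\models\mathcal{A}^{\mathrm{op}}_{\mathcal{D}}x>c$ iff $\mathrm{op}(\alpha^x_{\mathcal{D}}(\omega,t,l))>c$; $(\omega,t,l)\models\mathcal{C}^{\mathrm{op}}_{\mathcal{D}}\varphi>c$ iff $\mathrm{op}(\{g(l'):l'\in L^l_{\mathcal{D}}\})>c$ (multiset), where $g(l')=1$ if $(\omega,t,l')\models\varphi$ and $g(l')=0$ otherwise. Quantitative semantics (robustness, values in $\mathbb{R}\cup\{\pm\infty\}$, with $\inf\emptyset=+\infty$): $\rho(x>c,\omega,t,l)=\pi_x(\omega)[t,l]-c$; $\rho(\neg\varphi)=-\rho(\varphi)$; $\rho(\varphi_1\wedge\varphi_2)=\min\{\rho(\varphi_1),\rho(\varphi_2)\}$; $\rho(\varphi_1\vee\varphi_2)=\max\{\rho(\varphi_1),\rho(\varphi_2)\}$ (all at the same $\omega,t,l$); $\rho(\varphi_1\mathcal{U}_I\varphi_2,\omega,t,l)=\sup_{t'\in(t+I)\cap\mathbb{T}}\min\{\rho(\varphi_2,\omega,t',l),\ \inf_{t''\in(t,t')}\rho(\varphi_1,\omega,t'',l)\}$; $\rho(\mathcal{A}^{\mathrm{sum}}_{\mathcal{D}}x>c,\omega,t,l)=\big(\mathrm{sum}(\alpha^x_{\mathcal{D}}(\omega,t,l))-c\big)/|\alpha^x_{\mathcal{D}}(\omega,t,l)|$ and $\rho(\mathcal{A}^{\mathrm{op}}_{\mathcal{D}}x>c,\omega,t,l)=\mathrm{op}(\alpha^x_{\mathcal{D}}(\omega,t,l))-c$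 for $\mathrm{op}\in\{\max,\min,\mathrm{avg}\}$. For counting, let $R=\{\rho(\varphi,\omega,t,l'):l'\in L^l_{\mathcal{D}}\}$ (multiset) and let $\delta(k,R)$ denote the $k$-th largest element of $R$ counted with multiplicity; then $\rho(\mathcal{C}^{\max}_{\mathcal{D}}\varphi>c)=\max R$, $\rho(\mathcal{C}^{\min}_{\mathcal{D}}\varphi>c)=\min R$, $\rho(\mathcal{C}^{\mathrm{sum}}_{\mathcal{D}}\varphi>c)=\delta(\lfloor c\rfloor+1,R)$, $\rho(\mathcal{C}^{\mathrm{avg}}_{\mathcal{D}}\varphi>c)=\delta(\lfloor c\,|L^l_{\mathcal{D}}|\rfloor+1,R)$. *)

theory Defs
  imports Complex_Main "HOL-Library.Multiset" "HOL-Library.Extended_Real"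
begin

definition is_walk :: "'l set set \<Rightarrow> 'l list \<Rightarrow> bool" where
  "is_walk E vs \<longleftrightarrow> vs \<noteq> [] \<and> (\<forall>i. Suc i < length vs \<longrightarrow> {vs ! i, vs ! Suc i} \<in> E)"

definition walk_weight :: "('l set \<Rightarrow> real) \<Rightarrow> 'l list \<Rightarrow> real" where
  "walk_weight eta vs = (\<Sum>i<length vs - 1. eta {vs ! i, vs ! Suc i})"

text \<open>Graph distance: minimum total weight over all paths between l and l', +infinity if none.\<close>
definition graph_dist :: "'l set set \<Rightarrow> ('l set \<Rightarrow> real) \<Rightarrow> 'l \<Rightarrow> 'l \<Rightarrow> ereal" where
  "graph_dist E eta l l' =
     (INF vs \<in> {vs. is_walk E vs \<and> hd vs = l \<and> last vs = l'}. ereal (walk_weight eta vs))"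

definition undirected_weighted_graph :: "'l set set \<Rightarrow> ('l set \<Rightarrow> real) \<Rightarrow> bool" where
  "undirected_weighted_graph E eta \<longleftrightarrow>
     (\<forall>e\<in>E. \<exists>u v. e = {u, v}) \<and> (\<forall>e\<in>E. eta e \<ge> 0)"

datatype 'p locf = LTrue | LProp 'p | LNot "'p locf" | LOr "'p locf" "'p locf"

primrec lsat :: "'p set \<Rightarrow> 'p locf \<Rightarrow> bool" where
  "lsat P LTrue = True"
| "lsat P (LProp p) = (p \<in> P)"
| "lsat P (LNot \<psi>) = (\<not> lsat P \<psi>)"
| "lsat P (LOr \<psi>1 \<psi>2) = (lsat P \<psi>1 \<or> lsat P \<psi>2)"

type_synonym 'p sdom = "ereal \<times> ereal \<times> 'p locf"

definition Ldom :: "('l \<Rightarrow> 'l \<Rightarrow> ereal) \<Rightarrow> ('l \<Rightarrow> 'p set) \<Rightarrow> 'p sdom \<Rightarrow> 'l \<Rightarrow> 'l set" where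
  "Ldom d lab D l = (case D of (d1, d2, \<psi>) \<Rightarrow>
      {l'. d1 \<le> d l l' \<and> d l l' \<le> d2 \<and> lsat (lab l') \<psi>})"

datatype aop = OpMax | OpMin | OpSum | OpAvg

definition aggr :: "aop \<Rightarrow> real multiset \<Rightarrow> real" where
  "aggr op M = (case op of
      OpMax \<Rightarrow> Max (set_mset M)
    | OpMin \<Rightarrow> Min (set_mset M)
    | OpSum \<Rightarrow> sum_mset M
    | OpAvg \<Rightarrow> sum_mset M / real (size M))"

definition alpha :: "('l \<Rightarrow> 'l \<Rightarrow> ereal) \<Rightarrow> ('l \<Rightarrow> 'p set) \<Rightarrow> 'p sdom \<Rightarrow> 'x
    \<Rightarrow> (real \<Rightarrow> 'l \<Rightarrow> 'x \<Rightarrow> real) \<Rightarrow> real \<Rightarrow> 'l \<Rightarrow> real multiset" where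
  "alpha d lab D x \<omega> t l = image_mset (\<lambda>l'. \<omega> t l' x) (mset_set (Ldom d lab D l))"

text \<open>k-th largest element (k >= 1) of a multiset, counted with multiplicity.\<close>
definition kth_largest :: "nat \<Rightarrow> ('a::linorder) multiset \<Rightarrow> 'a" where
  "kth_largest k R = rev (sorted_list_of_multiset R) ! (k - 1)"

datatype ('x, 'p) sastl =
    Gt 'x real
  | Neg "('x, 'p) sastl"
  | Conj "('x, 'p) sastl" "('x, 'p) sastl"
  | Disj "('x, 'p) sastl" "('x, 'p) sastl"
  | Until "real set" "('x, 'p) sastl" "('x, 'p) sastl"
  | Agg aop "'p sdom" 'x real
  | Cnt aop "'p sdom" "('x, 'p) sastl" real

text \<open>Signals: omega t l x = pi_x(omega)[t,l]; only t >= 0 (the time domain) is relevant.\<close>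

primrec sat :: "('l::finite \<Rightarrow> 'l \<Rightarrow> ereal) \<Rightarrow> ('l \<Rightarrow> 'p set) \<Rightarrow> (real \<Rightarrow> 'l \<Rightarrow> 'x \<Rightarrow> real)
    \<Rightarrow> real \<Rightarrow> 'l \<Rightarrow> ('x, 'p) sastl \<Rightarrow> bool" where
  "sat d lab \<omega> t l (Gt x c) = (\<omega> t l x > c)"
| "sat d lab \<omega> t l (Neg \<phi>) = (\<not> sat d lab \<omega> t l \<phi>)"
| "sat d lab \<omega> t l (Conj \<phi>1 \<phi>2) = (sat d lab \<omega> t l \<phi>1 \<and> sat d lab \<omega> t l \<phi>2)"
| "sat d lab \<omega> t l (Disj \<phi>1 \<phi>2) = (sat d lab \<omega> t l \<phi>1 \<or> sat d lab \<omega> t l \<phi>2)"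
| "sat d lab \<omega> t l (Until I \<phi>1 \<phi>2) =
     (\<exists>t'. t' - t \<in> I \<and> t' \<ge> 0 \<and> sat d lab \<omega> t' l \<phi>2 \<and>
           (\<forall>t''. t < t'' \<and> t'' < t' \<longrightarrow> sat d lab \<omega> t'' l \<phi>1))"
| "sat d lab \<omega> t l (Agg op D x c) = (aggr op (alpha d lab D x \<omega> t l) > c)"
| "sat d lab \<omega> t l (Cnt op D \<phi> c) =
     (aggr op (image_mset (\<lambda>l'. if sat d lab \<omega> t l' \<phi> then 1 else 0) (mset_set (Ldom d lab D l))) > c)"

primrec rob :: "('l::finite \<Rightarrow> 'l \<Rightarrow> ereal) \<Rightarrow> ('l \<Rightarrow> 'p set) \<Rightarrow> (real \<Rightarrow> 'l \<Rightarrow> 'x \<Rightarrow> real)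
    \<Rightarrow> real \<Rightarrow> 'l \<Rightarrow> ('x, 'p) sastl \<Rightarrow> ereal" where
  "rob d lab \<omega> t l (Gt x c) = ereal (\<omega> t l x - c)"
| "rob d lab \<omega> t l (Neg \<phi>) = - rob d lab \<omega> t l \<phi>"
| "rob d lab \<omega> t l (Conj \<phi>1 \<phi>2) = min (rob d lab \<omega> t l \<phi>1) (rob d lab \<omega> t l \<phi>2)"
| "rob d lab \<omega> t l (Disj \<phi>1 \<phi>2) = max (rob d lab \<omega> t l \<phi>1) (rob d lab \<omega> t l \<phi>2)"
| "rob d lab \<omega> t l (Until I \<phi>1 \<phi>2) =
     (SUP t' \<in> {t'. t' - t \<in> I \<and> t' \<ge> 0}.
        min (rob d lab \<omega> t' l \<phi>2) (INF t'' \<in> {t<..<t'}. rob d lab \<omega> t'' l \<phi>1))"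
| "rob d lab \<omega> t l (Agg op D x c) =
     (case op of
        OpSum \<Rightarrow> ereal ((sum_mset (alpha d lab D x \<omega> t l) - c) / real (size (alpha d lab D x \<omega> t l)))
      | _ \<Rightarrow> ereal (aggr op (alpha d lab D x \<omega> t l) - c))"
| "rob d lab \<omega> t l (Cnt op D \<phi> c) =
     (let R = image_mset (\<lambda>l'. rob d lab \<omega> t l' \<phi>) (mset_set (Ldom d lab D l)) in
      case op of
        OpMax \<Rightarrow> Max (set_mset R)
      | OpMin \<Rightarrow> Min (set_mset R)
      | OpSum \<Rightarrow> kth_largest (nat \<lfloor>c\<rfloor> + 1) R
      | OpAvg \<Rightarrow> kth_largest (nat \<lfloor>c * real (card (Ldom d lab D l))\<rfloor> + 1) R)"

definition sdom_ok :: "('l \<Rightarrow> 'l \<Rightarrow> ereal) \<Rightarrow> ('l \<Rightarrow> 'p set) \<Rightarrow> 'p sdom \<Rightarrow> bool" where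
  "sdom_ok d lab D \<longleftrightarrow> (case D of (d1, d2, \<psi>) \<Rightarrow> 0 \<le> d1 \<and> d1 \<le> d2)
     \<and> (\<forall>l. Ldom d lab D l \<noteq> {})"

definition time_interval :: "real set \<Rightarrow> bool" where
  "time_interval I \<longleftrightarrow> I \<noteq> {} \<and> I \<subseteq> {0<..} \<and>
     (\<forall>a\<in>I. \<forall>b\<in>I. \<forall>s. a \<le> s \<and> s \<le> b \<longrightarrow> s \<in> I)"

primrec wf :: "('l \<Rightarrow> 'l \<Rightarrow> ereal) \<Rightarrow> ('l \<Rightarrow> 'p set) \<Rightarrow> ('x, 'p) sastl \<Rightarrow> bool" where
  "wf d lab (Gt x c) = True"
| "wf d lab (Neg \<phi>) = wf d lab \<phi>"
| "wf d lab (Conj \<phi>1 \<phi>2) = (wf d lab \<phi>1 \<and> wf d lab \<phi>2)"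
| "wf d lab (Disj \<phi>1 \<phi>2) = (wf d lab \<phi>1 \<and> wf d lab \<phi>2)"
| "wf d lab (Until I \<phi>1 \<phi>2) = (time_interval I \<and> wf d lab \<phi>1 \<and> wf d lab \<phi>2)"
| "wf d lab (Agg op D x c) = sdom_ok d lab D"
| "wf d lab (Cnt op D \<phi> c) = (sdom_ok d lab D \<and> wf d lab \<phi> \<and>
     (if op = OpSum then 0 \<le> c \<and> (\<forall>l. c < real (card (Ldom d lab D l)))
      else 0 \<le> c \<and> c < 1))"

definition sig_dist :: "(real \<Rightarrow> 'l \<Rightarrow> 'x \<Rightarrow> real) \<Rightarrow> (real \<Rightarrow> 'l \<Rightarrow> 'x \<Rightarrow> real) \<Rightarrow> ereal" where
  "sig_dist \<omega> \<omega>' = (SUP p \<in> {t0. t0 \<ge> 0} \<times> UNIV \<times> UNIV.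
      ereal \<bar>\<omega> (fst p) (fst (snd p)) (snd (snd p)) - \<omega>' (fst p) (fst (snd p)) (snd (snd p))\<bar>)"

end

theory Submission
  imports Defs
begin

text \<open>Two facts combine. First, robustness is sign-sound: a positive robustness implies
  satisfaction and a negative one implies violation. Second, robustness is 1-Lipschitz in the
  signal for the sup distance: every connective (negation, min, max, sup, inf, the aggregation
  operators and the order statistics used by the counting operators) moves its value by at most
  as much as it moves its arguments. Hence if the distance to \<open>\<omega>'\<close> is below the robustness at
  \<open>\<omega>\<close>, the robustness at \<open>\<omega>'\<close> is still positive.\<close>

section \<open>Order statistics\<close>

lemma kth_largest_count_bounds:
  fixes M :: "'a::linorder multiset"
  assumes "1 \<le> k" "k \<le> size M"
  shows "k \<le> size (filter_mset (\<lambda>x. kth_largest k M \<le> x) M)"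
    and "size (filter_mset (\<lambda>x. kth_largest k M < x) M) < k"
proof -
  define xs where "xs = sorted_list_of_multiset M"
  define n where "n = length xs"
  define j where "j = n - k"
  have sorted: "sorted xs" and mset_xs: "mset xs = M" by (auto simp: xs_def)
  have n: "n = size M" using mset_xs n_def by (metis size_mset)
  have j: "j < n" "n - j = k" using assms n j_def by auto
  have kth: "kth_largest k M = xs ! j"
    unfolding kth_largest_def xs_def[symmetric] j_def n_def using assms n n_def
    by (simp add: rev_nth)
  have size_filter: "\<And>P. size (filter_mset P M) = card {i. i < n \<and> P (xs ! i)}"
    by (metis mset_xs mset_filter size_mset length_filter_conv_card n_def)
  have "{j..<n} \<subseteq> {i. i < n \<and> xs ! j \<le> xs ! i}"
    using sorted by (auto simp: n_def intro: sorted_nth_mono)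
  from card_mono[OF _ this] j
  show "k \<le> size (filter_mset (\<lambda>x. kth_largest k M \<le> x) M)"
    by (simp add: size_filter kth)
  have "{i. i < n \<and> xs ! j < xs ! i} \<subseteq> {Suc j..<n}"
    using sorted j by (auto simp: n_def not_less_eq_eq[symmetric] dest: sorted_nth_mono[of xs _ j])
  from card_mono[OF _ this] j
  show "size (filter_mset (\<lambda>x. kth_largest k M < x) M) < k"
    by (simp add: size_filter kth)
qed

lemma kth_largest_image_count_bounds:
  fixes f :: "'b \<Rightarrow> 'a::linorder"
  assumes "finite S" "1 \<le> k" "k \<le> card S"
  shows "k \<le> card {x\<in>S. kth_largest k (image_mset f (mset_set S)) \<le> f x}"
    and "card {x\<in>S. kth_largest k (image_mset f (mset_set S)) < f x} < k"
  using kth_largest_count_bounds[of k "image_mset f (mset_set S)"] assms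
  by (simp_all add: filter_mset_image_mset filter_mset_mset_set)

lemma kth_largest_in:
  fixes M :: "'a::linorder multiset"
  assumes "1 \<le> k" "k \<le> size M"
  shows "kth_largest k M \<in># M"
proof -
  have "length (sorted_list_of_multiset M) = size M"
    by (metis mset_sorted_list_of_multiset size_mset)
  then have "kth_largest k M \<in> set (rev (sorted_list_of_multiset M))"
    unfolding kth_largest_def using assms by (intro nth_mem) simp
  then show ?thesis by simp
qed

lemma kth_largest_one:
  fixes M :: "'a::linorder multiset"
  assumes "M \<noteq> {#}"
  shows "kth_largest 1 M = Max (set_mset M)"
proof -
  have k: "1 \<le> (1::nat)" "1 \<le> size M" using assms by (auto simp: Suc_le_eq nonempty_has_size)
  have "size (filter_mset (\<lambda>x. kth_largest 1 M < x) M) = 0"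
    using kth_largest_count_bounds(2)[OF k] by simp
  then have "\<forall>x\<in>#M. x \<le> kth_largest 1 M" by (auto simp: not_less)
  then show ?thesis using kth_largest_in[OF k] by (intro Max_eqI[symmetric]) auto
qed

lemma kth_largest_size:
  fixes M :: "'a::linorder multiset"
  assumes "M \<noteq> {#}"
  shows "kth_largest (size M) M = Min (set_mset M)"
proof -
  have k: "1 \<le> size M" "size M \<le> size M" using assms by (auto simp: Suc_le_eq nonempty_has_size)
  let ?P = "\<lambda>x. kth_largest (size M) M \<le> x"
  have "size M = size (filter_mset ?P M) + size (filter_mset (\<lambda>x. \<not> ?P x) M)"
    by (metis multiset_partition size_union)
  then have "size (filter_mset (\<lambda>x. \<not> ?P x) M) = 0"
    using kth_largest_count_bounds(1)[OF k] by linarith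
  then have "\<forall>x\<in>#M. ?P x" by simp
  then show ?thesis using kth_largest_in[OF k] by (intro Min_eqI[symmetric]) auto
qed

lemma kth_largest_gt_imp_card_ge:
  fixes r :: "'b \<Rightarrow> 'a::linorder"
  assumes "finite S" "1 \<le> k" "k \<le> card S"
    and "\<And>x. x \<in> S \<Longrightarrow> a < r x \<Longrightarrow> P x"
    and "a < kth_largest k (image_mset r (mset_set S))"
  shows "k \<le> card {x\<in>S. P x}"
proof -
  have "{x\<in>S. kth_largest k (image_mset r (mset_set S)) \<le> r x} \<subseteq> {x\<in>S. P x}"
    using assms(4,5) less_le_trans by blast
  then have "card {x\<in>S. kth_largest k (image_mset r (mset_set S)) \<le> r x} \<le> card {x\<in>S. P x}"
    using assms(1) by (intro card_mono) auto
  with kth_largest_image_count_bounds(1)[OF assms(1-3), of r] show ?thesis by linarith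
qed

lemma kth_largest_lt_imp_card_less:
  fixes r :: "'b \<Rightarrow> 'a::linorder"
  assumes "finite S" "1 \<le> k" "k \<le> card S"
    and "\<And>x. x \<in> S \<Longrightarrow> P x \<Longrightarrow> a \<le> r x"
    and "kth_largest k (image_mset r (mset_set S)) < a"
  shows "card {x\<in>S. P x} < k"
proof -
  have "{x\<in>S. P x} \<subseteq> {x\<in>S. kth_largest k (image_mset r (mset_set S)) < r x}"
    using assms(4,5) less_le_trans by blast
  then have "card {x\<in>S. P x} \<le> card {x\<in>S. kth_largest k (image_mset r (mset_set S)) < r x}"
    using assms(1) by (intro card_mono) auto
  with kth_largest_image_count_bounds(2)[OF assms(1-3), of r] show ?thesis by linarith
qed

lemma kth_largest_image_le_add:
  fixes f g :: "'b \<Rightarrow> 'a::{linorder,ordered_ab_semigroup_add}"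
  assumes S: "finite S" "1 \<le> k" "k \<le> card S" and fg: "\<And>x. x \<in> S \<Longrightarrow> f x \<le> g x + \<delta>"
  shows "kth_largest k (image_mset f (mset_set S)) \<le> kth_largest k (image_mset g (mset_set S)) + \<delta>"
proof (rule ccontr)
  let ?vf = "kth_largest k (image_mset f (mset_set S))"
  let ?vg = "kth_largest k (image_mset g (mset_set S))"
  assume "\<not> ?thesis"
  then have gap: "?vg + \<delta> < ?vf" by simp
  have "{x\<in>S. ?vf \<le> f x} \<subseteq> {x\<in>S. ?vg < g x}"
  proof clarify
    fix x assume x: "x \<in> S" "?vf \<le> f x"
    show "?vg < g x"
    proof (rule ccontr)
      assume "\<not> ?vg < g x"
      then have "g x + \<delta> \<le> ?vg + \<delta>" by (simp add: add_right_mono)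
      with gap x fg[OF x(1)] show False by (meson leD order.trans)
    qed
  qed
  then have "card {x\<in>S. ?vf \<le> f x} \<le> card {x\<in>S. ?vg < g x}"
    using S(1) by (intro card_mono) auto
  with kth_largest_image_count_bounds[OF S, of f] kth_largest_image_count_bounds[OF S, of g]
  show False by linarith
qed

section \<open>Additive perturbation of aggregates\<close>

lemma Max_image_le_add:
  fixes f g :: "'b \<Rightarrow> 'a::{linorder,ordered_ab_semigroup_add}"
  assumes "finite S" "S \<noteq> {}" and fg: "\<And>x. x \<in> S \<Longrightarrow> f x \<le> g x + \<delta>"
  shows "Max (f ` S) \<le> Max (g ` S) + \<delta>"
proof -
  have "Max (f ` S) \<in> f ` S" using assms by simp
  then obtain x where x: "x \<in> S" "Max (f ` S) = f x" by auto
  have "g x \<le> Max (g ` S)" using assms x by auto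
  then show ?thesis using x fg[OF x(1)] by (metis add_right_mono order.trans)
qed

lemma Min_image_le_add:
  fixes f g :: "'b \<Rightarrow> 'a::{linorder,ordered_ab_semigroup_add}"
  assumes "finite S" "S \<noteq> {}" and fg: "\<And>x. x \<in> S \<Longrightarrow> f x \<le> g x + \<delta>"
  shows "Min (f ` S) \<le> Min (g ` S) + \<delta>"
proof -
  have "Min (g ` S) \<in> g ` S" using assms by simp
  then obtain x where x: "x \<in> S" "Min (g ` S) = g x" by auto
  have "Min (f ` S) \<le> f x" using assms x by auto
  then show ?thesis using x fg[OF x(1)] by (metis order.trans)
qed

lemma min_le_add:
  fixes a1 a2 b1 b2 :: "'a::{linorder,ordered_ab_semigroup_add}"
  shows "a1 \<le> b1 + \<delta> \<Longrightarrow> a2 \<le> b2 + \<delta> \<Longrightarrow> min a1 a2 \<le> min b1 b2 + \<delta>"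
  by (cases "b1 \<le> b2") (auto simp: min_def dest: order.trans)

lemma max_le_add:
  fixes a1 a2 b1 b2 :: "'a::{linorder,ordered_ab_semigroup_add}"
  shows "a1 \<le> b1 + \<delta> \<Longrightarrow> a2 \<le> b2 + \<delta> \<Longrightarrow> max a1 a2 \<le> max b1 b2 + \<delta>"
  by (meson add_right_mono max.cobounded1 max.cobounded2 max.boundedI order.trans)

lemma SUP_le_add:
  fixes f g :: "'b \<Rightarrow> ereal"
  assumes "\<And>i. i \<in> A \<Longrightarrow> f i \<le> g i + ereal \<delta>"
  shows "(SUP i\<in>A. f i) \<le> (SUP i\<in>A. g i) + ereal \<delta>"
proof (rule SUP_least)
  fix i assume i: "i \<in> A"
  have "g i + ereal \<delta> \<le> (SUP i\<in>A. g i) + ereal \<delta>"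
    using i by (intro add_right_mono SUP_upper)
  with assms[OF i] show "f i \<le> (SUP i\<in>A. g i) + ereal \<delta>" by (rule order.trans)
qed

lemma INF_le_add:
  fixes f g :: "'b \<Rightarrow> ereal"
  assumes "\<And>i. i \<in> A \<Longrightarrow> f i \<le> g i + ereal \<delta>"
  shows "(INF i\<in>A. f i) \<le> (INF i\<in>A. g i) + ereal \<delta>"
proof -
  have "(INF i\<in>A. f i) - ereal \<delta> \<le> g i" if "i \<in> A" for i
  proof -
    have "(INF i\<in>A. f i) \<le> g i + ereal \<delta>"
      using INF_lower[OF that, of f] assms[OF that] by (rule order.trans)
    then show ?thesis by (cases "INF i\<in>A. f i"; cases "g i") auto
  qed
  then have "(INF i\<in>A. f i) - ereal \<delta> \<le> (INF i\<in>A. g i)" by (rule INF_greatest)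
  then show ?thesis by (cases "INF i\<in>A. f i"; cases "INF i\<in>A. g i") auto
qed

lemma ereal_uminus_le_add: "(b::ereal) \<le> a + ereal \<delta> \<Longrightarrow> - a \<le> - b + ereal \<delta>"
  by (cases a; cases b) auto

lemma sum_le_sum_add_card:
  fixes f g :: "'b \<Rightarrow> real"
  assumes "\<And>x. x \<in> S \<Longrightarrow> f x \<le> g x + \<delta>"
  shows "sum f S \<le> sum g S + real (card S) * \<delta>"
proof -
  have "sum f S \<le> sum (\<lambda>x. g x + \<delta>) S" using assms by (intro sum_mono) auto
  also have "\<dots> \<le> sum g S + real (card S) * \<delta>" by (cases "finite S") (simp_all add: sum.distrib)
  finally show ?thesis .
qed

lemma divide_le_divide_add:
  fixes a b n \<delta> :: real
  assumes "0 < n" "a \<le> b + n * \<delta>"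
  shows "a / n \<le> b / n + \<delta>"
  using assms by (simp add: field_simps)

section \<open>Counting operators\<close>

definition count_threshold_ok :: "aop \<Rightarrow> real \<Rightarrow> nat \<Rightarrow> bool" where
  "count_threshold_ok op c n \<longleftrightarrow> 0 \<le> c \<and> (if op = OpSum then c < real n else c < 1)"

text \<open>The counting operators compare the number of satisfying locations with a rank;
  \<open>Max\<close> and \<open>Min\<close> are the ranks \<open>1\<close> and \<open>n\<close>.\<close>
definition count_rank :: "aop \<Rightarrow> real \<Rightarrow> nat \<Rightarrow> nat" where
  "count_rank op c n = (case op of
      OpMax \<Rightarrow> 1 | OpMin \<Rightarrow> n | OpSum \<Rightarrow> nat \<lfloor>c\<rfloor> + 1 | OpAvg \<Rightarrow> nat \<lfloor>c * real n\<rfloor> + 1)"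

lemma less_iff_nat_floor_add_one_le:
  assumes "0 \<le> c"
  shows "c < real m \<longleftrightarrow> nat \<lfloor>c\<rfloor> + 1 \<le> m"
  using assms by linarith

lemma count_rank_bounds:
  assumes n: "0 < n" and c: "count_threshold_ok op c n"
  shows "1 \<le> count_rank op c n \<and> count_rank op c n \<le> n"
proof (cases op)
  case OpSum
  then show ?thesis
    using c less_iff_nat_floor_add_one_le[of c n] by (simp add: count_rank_def count_threshold_ok_def)
next
  case OpAvg
  have "0 \<le> c * real n" "c * real n < real n" using c n OpAvg by (auto simp: count_threshold_ok_def)
  then show ?thesis
    using OpAvg less_iff_nat_floor_add_one_le[of "c * real n" n] by (simp add: count_rank_def)
qed (use n in \<open>simp_all add: count_rank_def\<close>)

lemma aggr_indicator_gt_iff: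
  assumes S: "finite S" "S \<noteq> {}" and c: "count_threshold_ok op c (card S)"
  shows "c < aggr op (image_mset (\<lambda>x. if P x then 1 else 0) (mset_set S))
     \<longleftrightarrow> count_rank op c (card S) \<le> card {x\<in>S. P x}"
proof -
  let ?I = "\<lambda>x. if P x then 1 else (0::real)"
  have n: "0 < card S" using S by (simp add: card_gt_0_iff)
  have c01: "0 \<le> c" "op \<noteq> OpSum \<Longrightarrow> c < 1" using c by (auto simp: count_threshold_ok_def)
  have sum: "sum_mset (image_mset ?I (mset_set S)) = real (card {x\<in>S. P x})"
    using S by (simp add: sum_unfold_sum_mset[symmetric] sum.If_cases Int_def)
  have card_pos: "1 \<le> card {x\<in>S. P x} \<longleftrightarrow> (\<exists>x\<in>S. P x)"
    using S by (auto simp: Suc_le_eq card_gt_0_iff)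
  have card_all: "card S \<le> card {x\<in>S. P x} \<longleftrightarrow> (\<forall>x\<in>S. P x)"
  proof
    assume "card S \<le> card {x\<in>S. P x}"
    then have "{x\<in>S. P x} = S" using S(1) by (intro card_seteq) auto
    then show "\<forall>x\<in>S. P x" by blast
  next
    assume "\<forall>x\<in>S. P x"
    then have "{x\<in>S. P x} = S" by blast
    then show "card S \<le> card {x\<in>S. P x}" by simp
  qed
  show ?thesis
  proof (cases op)
    case OpMax
    have "c < Max (?I ` S) \<longleftrightarrow> (\<exists>x\<in>S. P x)"
      using S c01 OpMax by (subst Max_gr_iff) (auto simp del: if_image_distrib)
    then show ?thesis using OpMax S card_pos by (simp add: aggr_def count_rank_def)
  next
    case OpMin
    have "c < Min (?I ` S) \<longleftrightarrow> (\<forall>x\<in>S. P x)"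
      using S c01 OpMin by (subst Min_gr_iff) (auto simp del: if_image_distrib)
    then show ?thesis using OpMin S card_all by (simp add: aggr_def count_rank_def)
  next
    case OpSum
    then show ?thesis
      using c01 sum less_iff_nat_floor_add_one_le[of c] by (simp add: aggr_def count_rank_def)
  next
    case OpAvg
    have "c < real (card {x\<in>S. P x}) / real (card S) \<longleftrightarrow> c * real (card S) < real (card {x\<in>S. P x})"
      using n by (simp add: pos_less_divide_eq)
    then show ?thesis
      using OpAvg c01 n sum less_iff_nat_floor_add_one_le[of "c * real (card S)"]
      by (simp add: aggr_def count_rank_def)
  qed
qed

lemma count_sign_sound:
  fixes r :: "'b \<Rightarrow> 'a::{linorder,zero}"
  assumes S: "finite S" "S \<noteq> {}" and c: "count_threshold_ok op c (card S)"
    and pos: "\<And>x. x \<in> S \<Longrightarrow> 0 < r x \<Longrightarrow> P x"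
    and neg: "\<And>x. x \<in> S \<Longrightarrow> r x < 0 \<Longrightarrow> \<not> P x"
  shows "0 < kth_largest (count_rank op c (card S)) (image_mset r (mset_set S))
      \<Longrightarrow> c < aggr op (image_mset (\<lambda>x. if P x then 1 else 0) (mset_set S))"
    and "kth_largest (count_rank op c (card S)) (image_mset r (mset_set S)) < 0
      \<Longrightarrow> \<not> c < aggr op (image_mset (\<lambda>x. if P x then 1 else 0) (mset_set S))"
proof -
  let ?k = "count_rank op c (card S)"
  have k: "1 \<le> ?k" "?k \<le> card S"
    using count_rank_bounds[OF _ c] S by (auto simp: card_gt_0_iff)
  show "c < aggr op (image_mset (\<lambda>x. if P x then 1 else 0) (mset_set S))"
    if "0 < kth_largest ?k (image_mset r (mset_set S))"
  proof -
    have "?k \<le> card {x\<in>S. P x}"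
      using kth_largest_gt_imp_card_ge[OF S(1) k, where a = 0 and r = r and P = P] pos that
      by blast
    then show ?thesis using aggr_indicator_gt_iff[OF S c] by simp
  qed
  show "\<not> c < aggr op (image_mset (\<lambda>x. if P x then 1 else 0) (mset_set S))"
    if "kth_largest ?k (image_mset r (mset_set S)) < 0"
  proof -
    have "\<And>x. x \<in> S \<Longrightarrow> P x \<Longrightarrow> 0 \<le> r x" using neg not_le by blast
    then have "card {x\<in>S. P x} < ?k"
      using kth_largest_lt_imp_card_less[OF S(1) k, where a = 0 and r = r and P = P] that
      by blast
    then show ?thesis using aggr_indicator_gt_iff[OF S c] by simp
  qed
qed

section \<open>Sign soundness and Lipschitz continuity of robustness\<close>

lemma until_sign_sound:
  fixes r1 r2 :: "real \<Rightarrow> ereal"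
  assumes pos1: "\<And>s. 0 < r1 s \<Longrightarrow> P1 s" and neg1: "\<And>s. r1 s < 0 \<Longrightarrow> \<not> P1 s"
    and pos2: "\<And>s. 0 < r2 s \<Longrightarrow> P2 s" and neg2: "\<And>s. r2 s < 0 \<Longrightarrow> \<not> P2 s"
  shows "0 < (SUP t'\<in>T. min (r2 t') (INF t''\<in>{t<..<t'}. r1 t''))
      \<Longrightarrow> \<exists>t'\<in>T. P2 t' \<and> (\<forall>t''. t < t'' \<and> t'' < t' \<longrightarrow> P1 t'')"
    and "(SUP t'\<in>T. min (r2 t') (INF t''\<in>{t<..<t'}. r1 t'')) < 0
      \<Longrightarrow> \<not> (\<exists>t'\<in>T. P2 t' \<and> (\<forall>t''. t < t'' \<and> t'' < t' \<longrightarrow> P1 t''))"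
proof -
  assume "0 < (SUP t'\<in>T. min (r2 t') (INF t''\<in>{t<..<t'}. r1 t''))"
  then obtain t' where t': "t' \<in> T" "0 < r2 t'" "0 < (INF t''\<in>{t<..<t'}. r1 t'')"
    by (auto simp: less_SUP_iff)
  have "P1 t''" if "t < t''" "t'' < t'" for t''
    using t'(3) INF_lower[of t'' "{t<..<t'}" r1] that by (auto intro: pos1 less_le_trans)
  then show "\<exists>t'\<in>T. P2 t' \<and> (\<forall>t''. t < t'' \<and> t'' < t' \<longrightarrow> P1 t'')"
    using t' pos2 by blast
next
  assume neg: "(SUP t'\<in>T. min (r2 t') (INF t''\<in>{t<..<t'}. r1 t'')) < 0"
  show "\<not> (\<exists>t'\<in>T. P2 t' \<and> (\<forall>t''. t < t'' \<and> t'' < t' \<longrightarrow> P1 t''))"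
  proof
    assume "\<exists>t'\<in>T. P2 t' \<and> (\<forall>t''. t < t'' \<and> t'' < t' \<longrightarrow> P1 t'')"
    then obtain t' where t': "t' \<in> T" "P2 t'" "\<forall>t''. t < t'' \<and> t'' < t' \<longrightarrow> P1 t''" by blast
    have "0 \<le> (INF t''\<in>{t<..<t'}. r1 t'')"
      using t'(3) neg1 by (intro INF_greatest) (meson greaterThanLessThan_iff not_le)
    moreover have "0 \<le> r2 t'" using t'(2) neg2 not_le by blast
    ultimately have "0 \<le> min (r2 t') (INF t''\<in>{t<..<t'}. r1 t'')" by simp
    also have "\<dots> \<le> (SUP t'\<in>T. min (r2 t') (INF t''\<in>{t<..<t'}. r1 t''))"
      using t'(1) by (rule SUP_upper)
    finally show False using neg by simp
  qed
qed

lemma finite_nonempty_Ldom: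
  fixes d :: "'l::finite \<Rightarrow> 'l \<Rightarrow> ereal"
  assumes "sdom_ok d lab D"
  shows "finite (Ldom d lab D l)" "Ldom d lab D l \<noteq> {}"
  using assms by (auto simp: sdom_ok_def)

lemma count_threshold_ok_of_wf:
  "wf d lab (Cnt op D \<phi> c) \<Longrightarrow> count_threshold_ok op c (card (Ldom d lab D l))"
  by (auto simp: count_threshold_ok_def)

lemma rob_Cnt_eq_kth_largest:
  fixes d :: "'l::finite \<Rightarrow> 'l \<Rightarrow> ereal"
  assumes "sdom_ok d lab D"
  shows "rob d lab \<omega> t l (Cnt op D \<phi> c) = kth_largest (count_rank op c (card (Ldom d lab D l)))
           (image_mset (\<lambda>l'. rob d lab \<omega> t l' \<phi>) (mset_set (Ldom d lab D l)))"
proof -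
  let ?R = "image_mset (\<lambda>l'. rob d lab \<omega> t l' \<phi>) (mset_set (Ldom d lab D l))"
  have "?R \<noteq> {#}" using finite_nonempty_Ldom[OF assms] by (simp add: mset_set_empty_iff)
  then show ?thesis
    using kth_largest_one[of ?R] kth_largest_size[of ?R]
    by (cases op) (simp_all add: count_rank_def Let_def)
qed

lemma rob_sign_sound:
  fixes d :: "'l::finite \<Rightarrow> 'l \<Rightarrow> ereal" and \<phi> :: "('x, 'p) sastl"
  assumes "wf d lab \<phi>"
  shows "(0 < rob d lab \<omega> t l \<phi> \<longrightarrow> sat d lab \<omega> t l \<phi>) \<and>
         (rob d lab \<omega> t l \<phi> < 0 \<longrightarrow> \<not> sat d lab \<omega> t l \<phi>)"
  using assms
proof (induction \<phi> arbitrary: t l)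
  case (Neg \<phi>)
  then show ?case by (auto simp: ereal_uminus_less_reorder ereal_less_uminus_reorder)
next
  case (Conj \<phi>1 \<phi>2)
  then show ?case by (auto simp: min_less_iff_disj)
next
  case (Disj \<phi>1 \<phi>2)
  then show ?case by (auto simp: less_max_iff_disj)
next
  case (Until I \<phi>1 \<phi>2)
  then show ?case
    using until_sign_sound[of "\<lambda>s. rob d lab \<omega> s l \<phi>1" "\<lambda>s. sat d lab \<omega> s l \<phi>1"
        "\<lambda>s. rob d lab \<omega> s l \<phi>2" "\<lambda>s. sat d lab \<omega> s l \<phi>2" t "{t'. t' - t \<in> I \<and> t' \<ge> 0}"]
    by auto
next
  case (Agg op D x c)
  have "0 < card (Ldom d lab D l)"
    using finite_nonempty_Ldom[of d lab D l] Agg by (simp add: card_gt_0_iff)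
  then show ?case
    by (cases op) (auto simp: aggr_def alpha_def divide_less_0_iff zero_less_divide_iff)
next
  case (Cnt op D \<phi> c)
  have D: "sdom_ok d lab D" using Cnt.prems by simp
  show ?case
    using Cnt count_sign_sound[OF finite_nonempty_Ldom[OF D] count_threshold_ok_of_wf[OF Cnt.prems],
        where r = "\<lambda>l'. rob d lab \<omega> t l' \<phi>" and P = "\<lambda>l'. sat d lab \<omega> t l' \<phi>"]
    by (simp add: rob_Cnt_eq_kth_largest[OF D] del: rob.simps)
qed simp

lemma rob_Agg_le_add:
  fixes d :: "'l::finite \<Rightarrow> 'l \<Rightarrow> ereal"
  assumes D: "sdom_ok d lab D" and close: "\<And>l'. \<omega> t l' x \<le> \<omega>' t l' x + \<delta>"
  shows "rob d lab \<omega> t l (Agg op D x c) \<le> rob d lab \<omega>' t l (Agg op D x c) + ereal \<delta>"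
proof -
  let ?S = "Ldom d lab D l"
  let ?f = "\<lambda>l'. \<omega> t l' x" and ?g = "\<lambda>l'. \<omega>' t l' x"
  note S = finite_nonempty_Ldom[OF D, of l]
  have n: "0 < real (card ?S)" using S by (simp add: card_gt_0_iff)
  have sum: "sum ?f ?S \<le> sum ?g ?S + real (card ?S) * \<delta>"
    using close by (rule sum_le_sum_add_card)
  show ?thesis
  proof (cases op)
    case OpMax
    then show ?thesis using Max_image_le_add[OF S, of ?f ?g \<delta>] close
      by (simp add: aggr_def alpha_def)
  next
    case OpMin
    then show ?thesis using Min_image_le_add[OF S, of ?f ?g \<delta>] close
      by (simp add: aggr_def alpha_def)
  next
    case OpSum
    have "(sum ?f ?S - c) / real (card ?S) \<le> (sum ?g ?S - c) / real (card ?S) + \<delta>"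
      using sum n by (intro divide_le_divide_add) auto
    then show ?thesis using OpSum by (simp add: alpha_def sum_unfold_sum_mset[symmetric])
  next
    case OpAvg
    have "sum ?f ?S / real (card ?S) \<le> sum ?g ?S / real (card ?S) + \<delta>"
      using sum n by (intro divide_le_divide_add)
    then show ?thesis using OpAvg by (simp add: aggr_def alpha_def sum_unfold_sum_mset[symmetric])
  qed
qed

text \<open>The induction runs over all pairs of close signals at once: the case of negation
  uses the claim with the two signals exchanged.\<close>
lemma rob_le_rob_add:
  fixes d :: "'l::finite \<Rightarrow> 'l \<Rightarrow> ereal" and \<phi> :: "('x, 'p) sastl"
    and \<omega> \<omega>' :: "real \<Rightarrow> 'l \<Rightarrow> 'x \<Rightarrow> real"
  assumes "wf d lab \<phi>" "0 \<le> t"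
    and "\<And>t l x. 0 \<le> t \<Longrightarrow> \<bar>\<omega> t l x - \<omega>' t l x\<bar> \<le> \<delta>"
  shows "rob d lab \<omega> t l \<phi> \<le> rob d lab \<omega>' t l \<phi> + ereal \<delta>"
  using assms
proof (induction \<phi> arbitrary: \<omega> \<omega>' t l)
  case (Gt x c)
  have "\<omega> t l x - \<omega>' t l x \<le> \<delta>" using Gt.prems(3)[OF Gt.prems(2), of l x] by (simp add: abs_le_iff)
  then show ?case by simp
next
  case (Neg \<phi>)
  have "rob d lab \<omega>' t l \<phi> \<le> rob d lab \<omega> t l \<phi> + ereal \<delta>"
    using Neg by (intro Neg.IH) (simp_all add: abs_minus_commute)
  then show ?case by (simp add: ereal_uminus_le_add)
next
  case (Conj \<phi>1 \<phi>2)
  then show ?case by (simp only: rob.simps) (intro min_le_add; simp)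
next
  case (Disj \<phi>1 \<phi>2)
  then show ?case by (simp only: rob.simps) (intro max_le_add; simp)
next
  case (Until I \<phi>1 \<phi>2)
  then show ?case
    by (simp only: rob.simps) (intro SUP_le_add min_le_add INF_le_add; auto)
next
  case (Agg op D x c)
  have "\<omega> t l' x \<le> \<omega>' t l' x + \<delta>" for l'
    using Agg.prems(3)[OF Agg.prems(2), of l' x] by (simp add: abs_le_iff)
  with Agg.prems(1) show ?case by (intro rob_Agg_le_add) simp_all
next
  case (Cnt op D \<phi> c)
  have D: "sdom_ok d lab D" using Cnt.prems by simp
  let ?S = "Ldom d lab D l"
  note S = finite_nonempty_Ldom[OF D, of l]
  have k: "1 \<le> count_rank op c (card ?S)" "count_rank op c (card ?S) \<le> card ?S"
    using count_rank_bounds[OF _ count_threshold_ok_of_wf[OF Cnt.prems(1)]] S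
    by (auto simp: card_gt_0_iff)
  have "rob d lab \<omega> t l' \<phi> \<le> rob d lab \<omega>' t l' \<phi> + ereal \<delta>" for l'
    using Cnt by simp
  then show ?case
    unfolding rob_Cnt_eq_kth_largest[OF D] by (rule kth_largest_image_le_add[OF S(1) k])
qed

lemma abs_diff_le_sig_dist:
  "0 \<le> t \<Longrightarrow> ereal \<bar>\<omega> t l x - \<omega>' t l x\<bar> \<le> sig_dist \<omega> \<omega>'"
  unfolding sig_dist_def by (rule SUP_upper2[where i = "(t, l, x)"]) auto

theorem theorem2:
  fixes E :: "('l::finite) set set" and eta :: "'l set \<Rightarrow> real"
    and lab :: "'l \<Rightarrow> 'p set"
    and \<phi> :: "('x::finite, 'p) sastl"
    and \<omega> \<omega>' :: "real \<Rightarrow> 'l \<Rightarrow> 'x \<Rightarrow> real"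
    and t :: real and l :: 'l
  assumes "undirected_weighted_graph E eta"
    and "wf (graph_dist E eta) lab \<phi>"
    and "t \<ge> 0"
    and "sat (graph_dist E eta) lab \<omega> t l \<phi>"
    and "sig_dist \<omega> \<omega>' < rob (graph_dist E eta) lab \<omega> t l \<phi>"
  shows "sat (graph_dist E eta) lab \<omega>' t l \<phi>"
proof -
  let ?d = "graph_dist E eta"
  have "ereal \<bar>\<omega> 0 l x - \<omega>' 0 l x\<bar> \<le> sig_dist \<omega> \<omega>'" for x
    by (rule abs_diff_le_sig_dist) simp
  then have "0 \<le> sig_dist \<omega> \<omega>'" by (rule order.trans[rotated]) simp
  moreover have "sig_dist \<omega> \<omega>' \<noteq> \<infinity>" using assms(5) by auto
  ultimately obtain \<delta> where \<delta>: "sig_dist \<omega> \<omega>' = ereal \<delta>" by (cases "sig_dist \<omega> \<omega>'") auto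
  have "rob ?d lab \<omega> t l \<phi> \<le> rob ?d lab \<omega>' t l \<phi> + ereal \<delta>"
    using abs_diff_le_sig_dist[of _ \<omega> _ _ \<omega>'] \<delta> by (intro rob_le_rob_add[OF assms(2,3)]) auto
  with assms(5) \<delta> have "0 < rob ?d lab \<omega>' t l \<phi>"
    by (cases "rob ?d lab \<omega>' t l \<phi>"; cases "rob ?d lab \<omega> t l \<phi>") auto
  then show ?thesis using rob_sign_sound[OF assms(2)] by blast
qed

end
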